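(* Let $n\ge 1$, let $C_u(v_1),\ldots,C_u(v_n)>0$ and $R_1,\ldots,R_n>0$ be sustainable, i.e. $R_i\le C_u(v_i)$ for all $i$, $\sum_{j\ne i}R_j\le C_d(v_i)$ for all $i$ (for some downlink capacities $C_d(v_i)>0$), and $(n-1)\sum_{i=1}^n R_i\le\sum_{i=1}^n C_u(v_i)$. Run the algorithm described in the context on these inputs. Then $U_i[\alpha]\ge 0$ for all $i,\alpha$ with $1\le i,\alpha\le n$.
   Context: Sub-stream rate assigning algorithm. Input: $n$, uplink capacities $C_u(v_1),\ldots,C_u(v_n)$ and rates $R_1,\ldots,R_n$. Initialize $r_{i,j}:=0$ for all $1\le i,j\le n$ and $U_i := C_u(v_i)-R_i$ for $1\le i\le n$. Outer loop: for $i=1$ to $n$: set $R'_i := R_i$; inner loop: for $j=1$ to $n$: if $(n-2)R'_i > U_j$ then set $r_{i,j} := U_j/(n-2)$, else set $r_{i,j} := R'_i$; then set $U_j := U_j-(n-2)r_{i,j}$ and $R'_i := R'_i - r_{i,j}$; if $R'_i = 0$, exit the inner loop. Output all $r_{i,j}$. Notation: $U_i[\alpha]$ denotes the value of the variable $U_i$ at the start of iteration $\alpha$ of the outer loop. *)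

theory Defs
  imports Main Complex_Main
begin

text \<open>Inner loop of the sub-stream rate assigning algorithm for a fixed outer index i.
  Arguments: the real number m = n - 2, the remaining inner indices j (in order),
  the current value of R'_i, and the current vector U (indexed 1..n).\<close>
fun inner_loop :: "real \<Rightarrow> nat list \<Rightarrow> real \<Rightarrow> (nat \<Rightarrow> real) \<Rightarrow> (nat \<Rightarrow> real)" where
  "inner_loop m [] Rp U = U"
| "inner_loop m (j # js) Rp U =
     (let r = (if m * Rp > U j then U j / m else Rp);
          U' = U(j := U j - m * r);
          Rp' = Rp - r
      in if Rp' = 0 then U' else inner_loop m js Rp' U')"

fun U_after :: "nat \<Rightarrow> (nat \<Rightarrow> real) \<Rightarrow> (nat \<Rightarrow> real) \<Rightarrow> nat \<Rightarrow> (nat \<Rightarrow> real)" where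
  "U_after n Cu R 0 = (\<lambda>i. Cu i - R i)"
| "U_after n Cu R (Suc k) = inner_loop (real n - 2) [1..<n+1] (R (Suc k)) (U_after n Cu R k)"

text \<open>U_i[alpha]: value of U_i at the start of iteration alpha (alpha >= 1) of the outer loop.\<close>
definition U_at :: "nat \<Rightarrow> (nat \<Rightarrow> real) \<Rightarrow> (nat \<Rightarrow> real) \<Rightarrow> nat \<Rightarrow> nat \<Rightarrow> real" where
  "U_at n Cu R i \<alpha> = U_after n Cu R (\<alpha> - 1) i"

end

theory Submission
  imports Defs
begin

text \<open>Each inner step lowers U j by (n - 2) r with r = U j / (n - 2) when (n - 2) R'_i exceeds U j
  (leaving exactly 0) and by (n - 2) R'_i \<le> U j otherwise, so it never makes U j negative.
  Hence nonnegativity of U is an invariant of both loops, and it holds initially since R_i \<le> C_u(v_i).\<close>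

lemma assigned_rate_keeps_nonneg:
  fixes m Rp u :: real
  assumes "0 \<le> u"
  shows "0 \<le> u - m * (if m * Rp > u then u / m else Rp)"
  using assms by (cases "m = 0") auto

lemma inner_loop_nonneg:
  assumes "\<forall>k\<in>S. 0 \<le> U k" and "k \<in> S"
  shows "0 \<le> inner_loop m js Rp U k"
  using assms
proof (induction js arbitrary: Rp U)
  case Nil
  then show ?case by simp
next
  case (Cons j js)
  define r where "r = (if m * Rp > U j then U j / m else Rp)"
  define U' where "U' = U(j := U j - m * r)"
  have U'_nonneg: "\<forall>k\<in>S. 0 \<le> U' k"
    using Cons.prems(1) assigned_rate_keeps_nonneg[of "U j" m Rp]
    by (auto simp: U'_def r_def)
  have "inner_loop m (j # js) Rp U = (if Rp - r = 0 then U' else inner_loop m js (Rp - r) U')"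
    by (simp only: inner_loop.simps Let_def r_def U'_def)
  then show ?case
    using Cons.IH[OF U'_nonneg Cons.prems(2)] U'_nonneg Cons.prems(2) by simp
qed

lemma U_after_nonneg:
  assumes "\<forall>i\<in>{1..n}. R i \<le> Cu i" and "i \<in> {1..n}"
  shows "0 \<le> U_after n Cu R k i"
  using assms(2)
proof (induction k arbitrary: i)
  case 0
  then show ?case using assms(1) by simp
next
  case (Suc k)
  then show ?case
    using inner_loop_nonneg[of "{1..n}" "U_after n Cu R k"] by simp
qed

theorem lemmaB4:
  fixes n :: nat and Cu Cd R :: "nat \<Rightarrow> real"
  assumes "n \<ge> 1"
    and "\<forall>i\<in>{1..n}. Cu i > 0"
    and "\<forall>i\<in>{1..n}. R i > 0"
    and "\<forall>i\<in>{1..n}. Cd i > 0"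
    and "\<forall>i\<in>{1..n}. R i \<le> Cu i"
    and "\<forall>i\<in>{1..n}. (\<Sum>j\<in>{1..n} - {i}. R j) \<le> Cd i"
    and "(real n - 1) * (\<Sum>i=1..n. R i) \<le> (\<Sum>i=1..n. Cu i)"
  shows "\<forall>i \<alpha>. 1 \<le> i \<and> i \<le> n \<and> 1 \<le> \<alpha> \<and> \<alpha> \<le> n \<longrightarrow> U_at n Cu R i \<alpha> \<ge> 0"
  using U_after_nonneg[OF assms(5)] by (simp add: U_at_def)

end
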